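(* Let $Q$ be an indefinite ternary quadratic form with $\det Q=1$. There is a constant $c>0$ depending only on $Q$ such that the following holds. Let $L\subset\mathbb{R}^3$ be a plane and let $\mathbf{m}_1,\mathbf{m}_2,\mathbf{m}_3\in\mathbb{Z}^3\cap L$ be such that no two of them lie on a common line through the origin. If $0\le\epsilon<1$, $R>1$, $|Q(\mathbf{m}_i)|\le\epsilon$ and $R<\|\mathbf{m}_i\|<R^2$ for all $1\le i\le 3$, then $\epsilon\ge cR^{-64}$.
   Context: $\|\cdot\|$ is the supremum norm on $\mathbb{R}^3$. *)

theory Defs
  imports "HOL-Analysis.Analysis"
begin

text \<open>A ternary quadratic form is represented by its symmetric Gram matrix A,
  Q(x) = x^T A x; its determinant is det A.\<close>
definition qform :: "real^3^3 \<Rightarrow> real^3 \<Rightarrow> real" where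
  "qform A x = x \<bullet> (A *v x)"

definition indefinite_qform :: "real^3^3 \<Rightarrow> bool" where
  "indefinite_qform A \<longleftrightarrow> (\<exists>x. qform A x > 0) \<and> (\<exists>y. qform A y < 0)"

definition int_vec :: "real^3 \<Rightarrow> bool" where
  "int_vec x \<longleftrightarrow> (\<forall>i. x $ i \<in> \<int>)"

end

theory Submission
  imports Defs
begin

text \<open>Write m3 = a m1 + b m2. By Cramer's rule a and b are quotients of nonzero integer
  cross products, so a, b and their inverses are O(H^2) when all m_i have norm at most H;
  expanding Q(m3) then shows that the polar value B(m1, m2) is O(H^8 \<epsilon>) as well. In the frame
  m1, m2, m1 \<times> m2 the Gram matrix of Q has determinant |m1 \<times> m2|^4 \<ge> 1, while its top left
  block, made of Q(m1), B(m1, m2) and Q(m2), is small; hence 1 = O(H^16 \<epsilon>). With H = 2 R^2 this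
  even gives \<epsilon> \<ge> c R^(-32).\<close>

unbundle cross3_syntax

lemma int_vec_nonzero_norm_ge1:
  fixes x :: "real^3"
  assumes "int_vec x" and "x \<noteq> 0"
  shows "1 \<le> norm x"
proof -
  obtain i where "x $ i \<noteq> 0"
    using assms(2) by (metis vec_eq_iff zero_index)
  then have "1 \<le> \<bar>x $ i\<bar>"
    using assms(1) by (simp add: int_vec_def Ints_nonzero_abs_ge1)
  then show ?thesis
    using component_le_norm_cart order_trans by blast
qed

lemma int_vec_cross:
  assumes "int_vec x" and "int_vec y"
  shows "int_vec (x \<times> y)"
  using assms unfolding int_vec_def forall_3 by (simp add: cross_components)

lemma norm_cross_le: "norm (x \<times> y) \<le> norm x * norm y"
proof (rule power2_le_imp_le)
  show "(norm (x \<times> y))\<^sup>2 \<le> (norm x * norm y)\<^sup>2"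
    using norm_cross_dot[of x y] zero_le_power2[of "x \<bullet> y"] by linarith
qed simp

lemma abs_inner_matrix_vector_le:
  fixes A :: "real^'n^'m"
  shows "\<bar>x \<bullet> (A *v y)\<bar> \<le> onorm ((*v) A) * norm x * norm y"
proof -
  have "\<bar>x \<bullet> (A *v y)\<bar> \<le> norm x * norm (A *v y)"
    by (rule Cauchy_Schwarz_ineq2)
  also have "\<dots> \<le> norm x * (onorm ((*v) A) * norm y)"
    by (intro mult_left_mono onorm) auto
  finally show ?thesis
    by (simp add: ac_simps)
qed

lemma congruence_matrix_entry:
  fixes P :: "real^'n^'m" and A :: "real^'n^'n"
  shows "(P ** A ** transpose P) $ i $ j = P $ i \<bullet> (A *v P $ j)"
proof -
  have "(P ** A ** transpose P) $ i $ j = (\<Sum>k\<in>UNIV. \<Sum>l\<in>UNIV. P$i$l * A$l$k * P$j$k)"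
    by (simp add: matrix_matrix_mult_def transpose_def sum_distrib_right)
  also have "\<dots> = (\<Sum>l\<in>UNIV. \<Sum>k\<in>UNIV. P$i$l * A$l$k * P$j$k)"
    by (rule sum.swap)
  also have "\<dots> = P $ i \<bullet> (A *v P $ j)"
    by (simp add: inner_vec_def matrix_vector_mult_def sum_distrib_left mult.assoc)
  finally show ?thesis .
qed

lemma inner_symmetric_matrix_commute:
  fixes A :: "real^'n^'n"
  assumes "transpose A = A"
  shows "y \<bullet> (A *v x) = x \<bullet> (A *v y)"
  by (metis assms dot_lmul_matrix inner_commute vector_transpose_matrix)

lemma qform_linear_combination:
  fixes A :: "real^3^3"
  assumes "transpose A = A"
  shows "qform A (a *\<^sub>R x + b *\<^sub>R y)
           = a\<^sup>2 * qform A x + 2 * a * b * (x \<bullet> (A *v y)) + b\<^sup>2 * qform A y"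
  using inner_symmetric_matrix_commute[OF assms, of x y]
  by (simp add: qform_def matrix_vector_right_distrib matrix_vector_mult_scaleR
      inner_add_left inner_add_right algebra_simps power2_eq_square)

lemma det_congruence_cross_frame:
  fixes A :: "real^3^3" and x y :: "real^3"
  defines "P \<equiv> vector [x, y, x \<times> y] :: real^3^3"
  shows "det (P ** A ** transpose P) = det A * ((x \<times> y) \<bullet> (x \<times> y))\<^sup>2"
proof -
  have "det P = (x \<times> y) \<bullet> (x \<times> y)"
    unfolding P_def dot_cross_det[symmetric] by (simp add: cross3_simps)
  then show ?thesis
    by (simp add: det_mul power2_eq_square)
qed

lemma abs_det3_le_if_top_left_block_small:
  fixes M :: "real^3^3"
  assumes block: "\<bar>M$1$1\<bar> \<le> g" "\<bar>M$1$2\<bar> \<le> g" "\<bar>M$2$1\<bar> \<le> g" "\<bar>M$2$2\<bar> \<le> g"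
    and entries: "\<And>i j. \<bar>M$i$j\<bar> \<le> K"
  shows "\<bar>det M\<bar> \<le> 6 * g * K\<^sup>2"
proof -
  have in_first: "\<bar>u * v * w\<bar> \<le> g * K\<^sup>2"
    if "\<bar>u\<bar> \<le> g" "\<bar>v\<bar> \<le> K" "\<bar>w\<bar> \<le> K" for u v w :: real
  proof -
    have "0 \<le> g" "0 \<le> K"
      using that abs_ge_zero order_trans by blast+
    then have "\<bar>u\<bar> * \<bar>v\<bar> * \<bar>w\<bar> \<le> g * K * K"
      using that by (intro mult_mono) auto
    then show ?thesis
      by (simp add: abs_mult power2_eq_square mult.assoc)
  qed
  then have in_second: "\<bar>u * v * w\<bar> \<le> g * K\<^sup>2"
    if "\<bar>u\<bar> \<le> K" "\<bar>v\<bar> \<le> g" "\<bar>w\<bar> \<le> K" for u v w :: real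
    using in_first[OF that(2,1,3)] by (simp only: mult.commute[of u v])
  \<comment> \<open>each of the six terms of the expansion contains an entry of the top left block\<close>
  show ?thesis
    unfolding det_3
    using in_first[OF block(1) entries entries, of 2 2 3 3]
      in_first[OF block(2) entries entries, of 2 3 3 1]
      in_second[OF entries block(3) entries, of 1 3 3 2]
      in_first[OF block(1) entries entries, of 2 3 3 2]
      in_first[OF block(2) entries entries, of 2 1 3 3]
      in_second[OF entries block(4) entries, of 1 3 3 1]
    unfolding abs_le_iff by linarith
qed

lemma coplanar_int_vec_coefficient_bounds:
  fixes m1 m2 m3 :: "real^3"
  assumes "int_vec m1" "int_vec m2" "int_vec m3"
    and "m3 = a *\<^sub>R m1 + b *\<^sub>R m2" and "m3 \<times> m2 \<noteq> 0"
    and "norm m1 \<le> H" "norm m2 \<le> H" "norm m3 \<le> H"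
  shows "1 \<le> \<bar>a\<bar> * H\<^sup>2" and "\<bar>a\<bar> \<le> H\<^sup>2"
proof -
  have cramer: "m3 \<times> m2 = a *\<^sub>R (m1 \<times> m2)"
    using assms(4) by (simp add: cross_add_left cross_mult_left)
  then have "m1 \<times> m2 \<noteq> 0"
    using assms(5) by auto
  then have cross_norm_ge1: "1 \<le> norm (m1 \<times> m2)"
    using assms(1,2) by (simp add: int_vec_nonzero_norm_ge1 int_vec_cross)
  have "norm (m1 \<times> m2) \<le> H\<^sup>2"
    using norm_cross_le[of m1 m2] assms(6,7) unfolding power2_eq_square
    by (meson mult_mono norm_ge_zero order_trans)
  moreover have "1 \<le> \<bar>a\<bar> * norm (m1 \<times> m2)"
    using int_vec_nonzero_norm_ge1[OF int_vec_cross[OF assms(3,2)] assms(5)] cramer by simp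
  ultimately show "1 \<le> \<bar>a\<bar> * H\<^sup>2"
    by (meson abs_ge_zero mult_left_mono order_trans)
  have "\<bar>a\<bar> \<le> \<bar>a\<bar> * norm (m1 \<times> m2)"
    using cross_norm_ge1 by (simp add: mult_le_cancel_left1)
  also have "\<dots> = norm (m3 \<times> m2)"
    using cramer by simp
  also have "\<dots> \<le> H\<^sup>2"
    using norm_cross_le[of m3 m2] assms(7,8) unfolding power2_eq_square
    by (meson mult_mono norm_ge_zero order_trans)
  finally show "\<bar>a\<bar> \<le> H\<^sup>2" .
qed

lemma abs_inner_matrix_vector_le_if_qform_small:
  fixes A :: "real^3^3"
  assumes "transpose A = A" and "m3 = a *\<^sub>R m1 + b *\<^sub>R m2"
    and "1 \<le> \<bar>a\<bar> * h" "\<bar>a\<bar> \<le> h" "1 \<le> \<bar>b\<bar> * h" "\<bar>b\<bar> \<le> h"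
    and "\<bar>qform A m1\<bar> \<le> \<epsilon>" "\<bar>qform A m2\<bar> \<le> \<epsilon>" "\<bar>qform A m3\<bar> \<le> \<epsilon>"
  shows "\<bar>m1 \<bullet> (A *v m2)\<bar> \<le> 3/2 * h^4 * \<epsilon>"
proof -
  define \<beta> where "\<beta> = m1 \<bullet> (A *v m2)"
  have "0 \<le> \<epsilon>"
    using assms(7) by linarith
  have "1 \<le> h\<^sup>2"
    using assms(3) mult_right_mono[OF assms(4), of h] assms(4)
    unfolding power2_eq_square by linarith
  have "a\<^sup>2 \<le> h\<^sup>2" "b\<^sup>2 \<le> h\<^sup>2"
    using power_mono[OF assms(4) abs_ge_zero, of 2] power_mono[OF assms(6) abs_ge_zero, of 2]
    by simp_all
  then have "\<bar>a\<^sup>2 * qform A m1\<bar> \<le> h\<^sup>2 * \<epsilon>" "\<bar>b\<^sup>2 * qform A m2\<bar> \<le> h\<^sup>2 * \<epsilon>"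
    using assms(7,8) by (simp_all add: abs_mult mult_mono)
  moreover have "qform A m3 = a\<^sup>2 * qform A m1 + 2 * a * b * \<beta> + b\<^sup>2 * qform A m2"
    unfolding assms(2) \<beta>_def by (rule qform_linear_combination[OF assms(1)])
  ultimately have "\<bar>2 * a * b * \<beta>\<bar> \<le> \<epsilon> + 2 * h\<^sup>2 * \<epsilon>"
    using assms(9) unfolding abs_le_iff by linarith
  then have "2 * (\<bar>a\<bar> * \<bar>b\<bar>) * \<bar>\<beta>\<bar> \<le> \<epsilon> + 2 * h\<^sup>2 * \<epsilon>"
    by (simp add: abs_mult)
  also have "\<dots> \<le> 3 * h\<^sup>2 * \<epsilon>"
    using mult_right_mono[OF \<open>1 \<le> h\<^sup>2\<close> \<open>0 \<le> \<epsilon>\<close>] by linarith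
  finally have small: "2 * (\<bar>a\<bar> * \<bar>b\<bar>) * \<bar>\<beta>\<bar> \<le> 3 * h\<^sup>2 * \<epsilon>" .
  have "1 * 1 \<le> (\<bar>a\<bar> * h) * (\<bar>b\<bar> * h)"
    using assms(3,5) by (intro mult_mono) auto
  then have "1 \<le> (\<bar>a\<bar> * \<bar>b\<bar>) * h\<^sup>2"
    by (simp add: power2_eq_square ac_simps)
  then have "\<bar>\<beta>\<bar> \<le> (2 * (\<bar>a\<bar> * \<bar>b\<bar>) * \<bar>\<beta>\<bar>) * h\<^sup>2 / 2"
    by (simp add: mult_le_cancel_left1 ac_simps)
  also have "\<dots> \<le> (3 * h\<^sup>2 * \<epsilon>) * h\<^sup>2 / 2"
    using small by (intro divide_right_mono mult_right_mono) auto
  also have "\<dots> = 3/2 * h^4 * \<epsilon>"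
    by (simp add: field_simps eval_nat_numeral)
  finally show ?thesis
    unfolding \<beta>_def .
qed

lemma onorm_matrix_vector_pos:
  fixes A :: "real^'n^'n"
  assumes "det A \<noteq> 0"
  shows "0 < onorm ((*v) A)"
proof -
  have "A \<noteq> 0"
  proof
    assume "A = 0"
    then have "row i A = 0" for i
      by (simp add: row_def vec_eq_iff)
    then show False
      using assms det_zero_row(1) by blast
  qed
  then show ?thesis
    using onorm_pos_lt[of "(*v) A"] by (auto simp: matrix_eq)
qed

lemma norm_le_2_infnorm:
  fixes x :: "real^3"
  shows "norm x \<le> 2 * infnorm x"
proof -
  have "norm x \<le> sqrt 3 * infnorm x"
    using norm_le_infnorm[of x] by simp
  also have "\<dots> \<le> 2 * infnorm x"
    using infnorm_pos_le[of x] by (intro mult_right_mono real_le_lsqrt) auto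
  finally show ?thesis .
qed

lemma in_span_pair_if_plane:
  fixes L :: "'a::euclidean_space set"
  assumes "subspace L" and "dim L = 2" and "x \<in> L" "y \<in> L" "z \<in> L"
    and "\<not> collinear {0, x, y}"
  shows "z \<in> span {x, y}"
proof -
  have "x \<noteq> 0" and "y \<notin> span {x}"
    using assms(6) by (auto simp: collinear_lemma span_singleton)
  then have "dim {y, x} = 2"
    by (simp add: dim_insert)
  then have "span {x, y} = span L"
    using assms(2-4) by (intro dim_eq_span) (auto simp: insert_commute span_base)
  then show ?thesis
    using assms(5) span_base by blast
qed

lemma qform_coplanar_int_triple_lower_bound:
  fixes A :: "real^3^3" and m1 m2 m3 :: "real^3"
  assumes sym: "transpose A = A" and det: "det A = 1"
    and int: "int_vec m1" "int_vec m2" "int_vec m3"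
    and indep: "m3 \<times> m1 \<noteq> 0" "m3 \<times> m2 \<noteq> 0"
    and plane: "m3 \<in> span {m1, m2}"
    and norm: "norm m1 \<le> H" "norm m2 \<le> H" "norm m3 \<le> H"
    and small: "\<bar>qform A m1\<bar> \<le> \<epsilon>" "\<bar>qform A m2\<bar> \<le> \<epsilon>" "\<bar>qform A m3\<bar> \<le> \<epsilon>"
  shows "1 \<le> 9 * (onorm ((*v) A))\<^sup>2 * H^16 * \<epsilon>"
proof -
  obtain a where "m3 - a *\<^sub>R m1 \<in> span {m2}"
    using plane by (auto simp: span_breakdown_eq)
  then obtain b where "m3 - a *\<^sub>R m1 = b *\<^sub>R m2"
    by (auto simp: span_singleton)
  then have m3: "m3 = a *\<^sub>R m1 + b *\<^sub>R m2" "m3 = b *\<^sub>R m2 + a *\<^sub>R m1"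
    by (simp_all add: algebra_simps)
  note a_bounds = coplanar_int_vec_coefficient_bounds[OF int m3(1) indep(2) norm]
  note b_bounds = coplanar_int_vec_coefficient_bounds[OF int(2,1,3) m3(2) indep(1) norm(2,1,3)]
  define g where "g = 3/2 * H^8 * \<epsilon>"
  have off_diagonal: "\<bar>m1 \<bullet> (A *v m2)\<bar> \<le> g"
    using abs_inner_matrix_vector_le_if_qform_small[OF sym m3(1) a_bounds b_bounds small]
    by (simp add: g_def power_mult[symmetric])
  define n where "n = m1 \<times> m2"
  have "n \<noteq> 0"
    using indep(2) m3(1) by (auto simp: n_def cross_add_left cross_mult_left)
  then have "1 \<le> norm n"
    unfolding n_def using int by (intro int_vec_nonzero_norm_ge1 int_vec_cross)
  have "1 \<le> H"
    using \<open>n \<noteq> 0\<close> int_vec_nonzero_norm_ge1[OF int(1)] norm(1) by (force simp: n_def)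
  define P :: "real^3^3" where "P = vector [m1, m2, n]"
  define M where "M = P ** A ** transpose P"
  have "1 \<le> det M"
    using \<open>1 \<le> norm n\<close> det det_congruence_cross_frame[of m1 m2 A]
    by (simp add: M_def P_def n_def power2_norm_eq_inner[symmetric] power_mult[symmetric] one_le_power)
  have rows: "norm (P $ k) \<le> H\<^sup>2" for k
  proof -
    have "H \<le> H\<^sup>2"
      using \<open>1 \<le> H\<close> by (simp add: power2_eq_square)
    moreover have "norm n \<le> H\<^sup>2"
      unfolding n_def power2_eq_square using norm_cross_le[of m1 m2] norm(1,2)
      by (meson mult_mono norm_ge_zero order_trans)
    ultimately show ?thesis
      using exhaust_3[of k] norm(1,2) by (auto simp: P_def)
  qed
  have entries: "\<bar>M$i$j\<bar> \<le> onorm ((*v) A) * H\<^sup>2 * H\<^sup>2" for i j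
  proof -
    have "onorm ((*v) A) * norm (P$i) * norm (P$j) \<le> onorm ((*v) A) * H\<^sup>2 * H\<^sup>2"
      using rows by (intro mult_mono mult_left_mono) (auto simp: onorm_pos_le)
    then show ?thesis
      unfolding M_def congruence_matrix_entry
      using abs_inner_matrix_vector_le[of "P$i" A "P$j"] by linarith
  qed
  have "\<epsilon> \<le> g"
  proof -
    have "1 \<le> 3/2 * H^8"
      using one_le_power[OF \<open>1 \<le> H\<close>, of 8] by linarith
    then show ?thesis
      using mult_right_mono[of 1 "3/2 * H^8" \<epsilon>] small(1) unfolding g_def by linarith
  qed
  then have block: "\<bar>M$1$1\<bar> \<le> g" "\<bar>M$1$2\<bar> \<le> g" "\<bar>M$2$1\<bar> \<le> g" "\<bar>M$2$2\<bar> \<le> g"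
    using small off_diagonal inner_symmetric_matrix_commute[OF sym, of m2 m1]
    by (simp_all add: M_def P_def congruence_matrix_entry qform_def)
  have "1 \<le> 6 * g * (onorm ((*v) A) * H\<^sup>2 * H\<^sup>2)\<^sup>2"
    using abs_det3_le_if_top_left_block_small[OF block entries] \<open>1 \<le> det M\<close> by linarith
  also have "\<dots> = 9 * (onorm ((*v) A))\<^sup>2 * H^16 * \<epsilon>"
    unfolding g_def by algebra
  finally show ?thesis .
qed

theorem lemma2p5:
  fixes A :: "real^3^3"
  assumes "transpose A = A" and "det A = 1" and "indefinite_qform A"
  shows "\<exists>c>0. \<forall>(L :: (real^3) set) m1 m2 m3 (\<epsilon>::real) (R::real).
           subspace L \<and> dim L = 2 \<and>
           m1 \<in> L \<and> m2 \<in> L \<and> m3 \<in> L \<and>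
           int_vec m1 \<and> int_vec m2 \<and> int_vec m3 \<and>
           \<not> collinear {0, m1, m2} \<and> \<not> collinear {0, m1, m3} \<and> \<not> collinear {0, m2, m3} \<and>
           0 \<le> \<epsilon> \<and> \<epsilon> < 1 \<and> R > 1 \<and>
           (\<forall>m\<in>{m1, m2, m3}. \<bar>qform A m\<bar> \<le> \<epsilon> \<and> R < infnorm m \<and> infnorm m < R^2)
           \<longrightarrow> \<epsilon> \<ge> c * R powr (-64)"
proof -
  define C where "C = 9 * 2^16 * (onorm ((*v) A))\<^sup>2"
  have "0 < C"
    using onorm_matrix_vector_pos[of A] assms(2) by (simp add: C_def)
  show ?thesis
  proof (intro exI[of _ "1 / C"] conjI allI impI)
    fix L :: "(real^3) set" and m1 m2 m3 :: "real^3" and \<epsilon> R :: real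
    assume "subspace L \<and> dim L = 2 \<and> m1 \<in> L \<and> m2 \<in> L \<and> m3 \<in> L \<and>
      int_vec m1 \<and> int_vec m2 \<and> int_vec m3 \<and>
      \<not> collinear {0, m1, m2} \<and> \<not> collinear {0, m1, m3} \<and> \<not> collinear {0, m2, m3} \<and>
      0 \<le> \<epsilon> \<and> \<epsilon> < 1 \<and> R > 1 \<and>
      (\<forall>m\<in>{m1, m2, m3}. \<bar>qform A m\<bar> \<le> \<epsilon> \<and> R < infnorm m \<and> infnorm m < R^2)"
    then have plane: "subspace L" "dim L = 2" "m1 \<in> L" "m2 \<in> L" "m3 \<in> L"
      and int: "int_vec m1" "int_vec m2" "int_vec m3"
      and indep: "\<not> collinear {0, m1, m2}" "m3 \<times> m1 \<noteq> 0" "m3 \<times> m2 \<noteq> 0"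
      and "R > 1"
      and small: "\<forall>m\<in>{m1, m2, m3}. \<bar>qform A m\<bar> \<le> \<epsilon> \<and> infnorm m < R^2"
      by (auto simp: cross_eq_0 insert_commute)
    have "norm m \<le> 2 * R\<^sup>2" if "m \<in> {m1, m2, m3}" for m
      using norm_le_2_infnorm[of m] small that by fastforce
    then have "1 \<le> 9 * (onorm ((*v) A))\<^sup>2 * (2 * R\<^sup>2)^16 * \<epsilon>"
      using small in_span_pair_if_plane[OF plane indep(1)]
      by (intro qform_coplanar_int_triple_lower_bound[OF assms(1,2) int indep(2,3)]) auto
    then have bound: "1 \<le> C * R^32 * \<epsilon>"
      by (simp add: C_def power_mult_distrib ac_simps flip: power_mult)
    have "1 / C * R powr (-64) = 1 / (C * R^64)"
      using \<open>R > 1\<close> by (simp add: powr_neg_numeral)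
    also have "\<dots> \<le> 1 / (C * R^32)"
      using \<open>0 < C\<close> \<open>R > 1\<close> by (intro divide_left_mono mult_left_mono power_increasing) auto
    also have "\<dots> \<le> \<epsilon>"
      using bound \<open>0 < C\<close> \<open>R > 1\<close> by (simp add: divide_le_eq ac_simps)
    finally show "1 / C * R powr (-64) \<le> \<epsilon>" .
  qed (use \<open>0 < C\<close> in simp)
qed

end
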